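(* Let $P\subset\mathbb{R}^d$ be a finite dataset with $|P|=n$, let $s$ be the number of compute nodes, $t<s$, $\delta>0$, and let $A\in\{0,1\}^{s\times n}$ (columns indexed by the points of $P$) satisfy the straggler-resilience property with parameter $\delta$. For $i\in[s]$ let $P_i$ be the set of points $\mathbf{p}\in P$ whose column has a $1$ in row $i$. Let $\mathcal{R}\subseteq[s]$ with $|\mathcal{R}|\ge s-t$ and let $\mathbf{b}=(b_i)_{i\in\mathcal{R}}$ be a corresponding non-negative recovery vector. For each $i\in\mathcal{R}$ let $Y_i\subset\mathbb{R}^d$ be an optimal set of $k$ $k$-median centers for $P_i$ (i.e. $Y_i$ minimizes $\mathrm{cost}(P_i,\cdot)$ over all sets of $k$ points of $\mathbb{R}^d$), and define $w_i:Y_i\to\mathbb{R}$ by $w_i(\mathbf{c})=|\mathrm{cluster}(\mathbf{c},P_i)|$. Let $Y=\bigcup_{i\in\mathcal{R}}Y_i$ with weight $w(\mathbf{c})=\sum_{i\in\mathcal{R}:\,\mathbf{c}\in Y_i}b_i\,w_i(\mathbf{c})$. Then for every set $C\subset\mathbb{R}^d$ of $k$ centers, $$\mathrm{cost}(P,C)-\sum_{i\in\mathcal{R}}b_i\,\mathrm{cost}(P_i,Y_i)\le\mathrm{cost}(Y,C,w)\le 2(1+\delta)\,\mathrm{cost}(P,C).$$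
   Context: $d(\mathbf{x},C)=\min_{\mathbf{c}\in C}\|\mathbf{x}-\mathbf{c}\|_2$. The $k$-median cost is $\mathrm{cost}(Q,C)=\sum_{\mathbf{q}\in Q}d(\mathbf{q},C)$, and for a weighted set $(Q,w)$, $\mathrm{cost}(Q,C,w)=\sum_{\mathbf{q}\in Q}w(\mathbf{q})d(\mathbf{q},C)$. For a center set $Y_i$, $\mathrm{cluster}(\mathbf{c},P_i)$ is the set of points of $P_i$ whose closest center in $Y_i$ is $\mathbf{c}$ (ties broken arbitrarily so that the clusters partition $P_i$). Straggler-resilience property with parameter $\delta$: for every $\mathcal{R}\subseteq[s]$ with $|\mathcal{R}|\ge s-t$, letting $A_{\mathcal{R}}$ be the rows of $A$ indexed by $\mathcal{R}$, there is a vector $\mathbf{b}\in\mathbb{R}^{|\mathcal{R}|}$ with non-negative entries (a recovery vector) such that $\mathbf{b}^TA_{\mathcal{R}}=(a_1,\ldots,a_n)$ with $1\le a_j\le 1+\delta$ for all $j$. *)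

theory Defs
  imports "HOL-Analysis.Analysis"
begin

text \<open>Distance from a point to a (finite, nonempty) set of centers: d(x,C) = min over c in C of the
  Euclidean distance. We use the library's infdist, which is this minimum for finite nonempty C.\<close>

definition kmed_cost :: "('a::metric_space) set \<Rightarrow> 'a set \<Rightarrow> real" where
  "kmed_cost Q C = (\<Sum>q\<in>Q. infdist q C)"

definition kmed_wcost :: "('a::metric_space) set \<Rightarrow> 'a set \<Rightarrow> ('a \<Rightarrow> real) \<Rightarrow> real" where
  "kmed_wcost Q C w = (\<Sum>q\<in>Q. w q * infdist q C)"

definition straggler_resilient ::
  "nat \<Rightarrow> nat \<Rightarrow> real \<Rightarrow> 'p set \<Rightarrow> (nat \<Rightarrow> 'p \<Rightarrow> real) \<Rightarrow> bool" where
  "straggler_resilient s t \<delta> P A \<longleftrightarrow>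
     (\<forall>R. R \<subseteq> {..<s} \<and> card R \<ge> s - t \<longrightarrow>
        (\<exists>b::nat \<Rightarrow> real. (\<forall>i\<in>R. b i \<ge> 0) \<and>
           (\<forall>p\<in>P. 1 \<le> (\<Sum>i\<in>R. b i * A i p) \<and> (\<Sum>i\<in>R. b i * A i p) \<le> 1 + \<delta>)))"

end

theory Submission
  imports Defs
begin

text \<open>Every point \<open>p\<close> of \<open>P\<^sub>i\<close> is moved to its nearest center \<open>\<sigma>\<^sub>i(p) \<in> Y\<^sub>i\<close>, at distance
  \<open>d(p, Y\<^sub>i)\<close>; by the triangle inequality this changes \<open>d(\<cdot>, C)\<close> by at most \<open>d(p, Y\<^sub>i)\<close>.
  Grouping points by their center shows that the weighted cost of \<open>Y\<close> is exactly
  \<open>\<Sum>\<^sub>i b\<^sub>i \<Sum>\<^sub>p\<^sub>\<in>\<^sub>P\<^sub>i d(\<sigma>\<^sub>i(p), C)\<close>, which therefore differs from \<open>\<Sum>\<^sub>i b\<^sub>i cost(P\<^sub>i, C)\<close> by at most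
  \<open>\<Sum>\<^sub>i b\<^sub>i cost(P\<^sub>i, Y\<^sub>i)\<close>. Since the recovery vector covers every point between \<open>1\<close> and \<open>1 + \<delta>\<close>
  times, \<open>\<Sum>\<^sub>i b\<^sub>i cost(P\<^sub>i, C)\<close> lies between \<open>cost(P, C)\<close> and \<open>(1 + \<delta>) cost(P, C)\<close>; for the upper
  bound, optimality of \<open>Y\<^sub>i\<close> gives \<open>cost(P\<^sub>i, Y\<^sub>i) \<le> cost(P\<^sub>i, C)\<close>, whence the factor 2.\<close>

lemma sum_comp_eq_sum_card_fibers:
  fixes g :: "'a \<Rightarrow> 'b" and f :: "'b \<Rightarrow> real"
  assumes "finite S" "finite T" "g ` S \<subseteq> T"
  shows "(\<Sum>p\<in>S. f (g p)) = (\<Sum>c\<in>T. real (card {p\<in>S. g p = c}) * f c)"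
proof -
  have "(\<Sum>p\<in>S. f (g p)) = (\<Sum>c\<in>T. \<Sum>p\<in>{p\<in>S. g p = c}. f (g p))"
    using sum.group[OF assms, of "\<lambda>p. f (g p)"] by simp
  also have "\<dots> = (\<Sum>c\<in>T. \<Sum>p\<in>{p\<in>S. g p = c}. f c)"
    by (intro sum.cong) auto
  finally show ?thesis by simp
qed

lemma kmed_cost_image_bounds:
  fixes Q :: "'a::metric_space set"
  assumes "\<forall>p\<in>Q. dist p (\<sigma> p) = infdist p Y"
  shows kmed_cost_sub_le_image: "kmed_cost Q C - kmed_cost Q Y \<le> (\<Sum>p\<in>Q. infdist (\<sigma> p) C)"
    and kmed_cost_image_le_add: "(\<Sum>p\<in>Q. infdist (\<sigma> p) C) \<le> kmed_cost Q C + kmed_cost Q Y"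
proof -
  have "(\<Sum>p\<in>Q. infdist p C - infdist p Y) \<le> (\<Sum>p\<in>Q. infdist (\<sigma> p) C)"
  proof (rule sum_mono)
    fix p assume "p \<in> Q"
    then show "infdist p C - infdist p Y \<le> infdist (\<sigma> p) C"
      using assms infdist_triangle[of p C "\<sigma> p"] by simp
  qed
  then show "kmed_cost Q C - kmed_cost Q Y \<le> (\<Sum>p\<in>Q. infdist (\<sigma> p) C)"
    by (simp add: kmed_cost_def sum_subtractf)
  have "(\<Sum>p\<in>Q. infdist (\<sigma> p) C) \<le> (\<Sum>p\<in>Q. infdist p C + infdist p Y)"
  proof (rule sum_mono)
    fix p assume "p \<in> Q"
    then show "infdist (\<sigma> p) C \<le> infdist p C + infdist p Y"
      using assms infdist_triangle[of "\<sigma> p" C p] by (simp add: dist_commute)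
  qed
  then show "(\<Sum>p\<in>Q. infdist (\<sigma> p) C) \<le> kmed_cost Q C + kmed_cost Q Y"
    by (simp add: kmed_cost_def sum.distrib)
qed

lemma kmed_wcost_Union_assigned:
  fixes Q Y :: "'i \<Rightarrow> 'a::metric_space set"
  assumes "finite R" "\<And>i. i \<in> R \<Longrightarrow> finite (Q i)" "\<And>i. i \<in> R \<Longrightarrow> finite (Y i)"
    and "\<And>i. i \<in> R \<Longrightarrow> \<sigma> i ` Q i \<subseteq> Y i"
  shows "kmed_wcost (\<Union>i\<in>R. Y i) C
           (\<lambda>c. \<Sum>i\<in>{i\<in>R. c \<in> Y i}. b i * real (card {p\<in>Q i. \<sigma> i p = c}))
         = (\<Sum>i\<in>R. b i * (\<Sum>p\<in>Q i. infdist (\<sigma> i p) C))"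
proof -
  let ?U = "\<Union>i\<in>R. Y i"
  let ?term = "\<lambda>i c. b i * (real (card {p\<in>Q i. \<sigma> i p = c}) * infdist c C)"
  have "kmed_wcost ?U C (\<lambda>c. \<Sum>i\<in>{i\<in>R. c \<in> Y i}. b i * real (card {p\<in>Q i. \<sigma> i p = c}))
      = (\<Sum>c\<in>?U. \<Sum>i\<in>R. if c \<in> Y i then ?term i c else 0)"
    unfolding kmed_wcost_def sum_distrib_right
    using assms(1) by (simp add: sum.inter_filter mult.assoc)
  also have "\<dots> = (\<Sum>i\<in>R. \<Sum>c\<in>?U. if c \<in> Y i then ?term i c else 0)"
    by (rule sum.swap)
  also have "\<dots> = (\<Sum>i\<in>R. \<Sum>c\<in>Y i. ?term i c)"
  proof (rule sum.cong[OF refl])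
    fix i assume "i \<in> R"
    then have "{c\<in>?U. c \<in> Y i} = Y i" by auto
    moreover have "finite ?U" using assms(1,3) by blast
    ultimately show "(\<Sum>c\<in>?U. if c \<in> Y i then ?term i c else 0) = (\<Sum>c\<in>Y i. ?term i c)"
      by (simp add: sum.inter_filter[symmetric])
  qed
  also have "\<dots> = (\<Sum>i\<in>R. b i * (\<Sum>p\<in>Q i. infdist (\<sigma> i p) C))"
  proof (rule sum.cong[OF refl])
    fix i assume "i \<in> R"
    then have "(\<Sum>p\<in>Q i. infdist (\<sigma> i p) C)
        = (\<Sum>c\<in>Y i. real (card {p\<in>Q i. \<sigma> i p = c}) * infdist c C)"
      using assms(2-4) by (intro sum_comp_eq_sum_card_fibers) auto
    then show "(\<Sum>c\<in>Y i. ?term i c) = b i * (\<Sum>p\<in>Q i. infdist (\<sigma> i p) C)"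
      by (simp add: sum_distrib_left)
  qed
  finally show ?thesis .
qed

lemma sum_rows_eq_sum_coverage:
  fixes A :: "'i \<Rightarrow> 'a \<Rightarrow> real"
  assumes "finite P" "\<forall>i\<in>R. \<forall>p\<in>P. A i p = 0 \<or> A i p = 1"
  shows "(\<Sum>i\<in>R. b i * (\<Sum>p\<in>{p\<in>P. A i p = 1}. f p)) = (\<Sum>p\<in>P. (\<Sum>i\<in>R. b i * A i p) * f p)"
proof -
  have "(\<Sum>p\<in>{p\<in>P. A i p = 1}. f p) = (\<Sum>p\<in>P. A i p * f p)" if "i \<in> R" for i
  proof -
    have "(\<Sum>p\<in>P. A i p * f p) = (\<Sum>p\<in>P. if A i p = 1 then f p else 0)"
      using assms(2) that by (intro sum.cong) auto
    then show ?thesis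
      using assms(1) by (simp add: sum.inter_filter)
  qed
  then have "(\<Sum>i\<in>R. b i * (\<Sum>p\<in>{p\<in>P. A i p = 1}. f p)) = (\<Sum>i\<in>R. \<Sum>p\<in>P. b i * A i p * f p)"
    by (simp add: sum_distrib_left mult.assoc)
  also have "\<dots> = (\<Sum>p\<in>P. (\<Sum>i\<in>R. b i * A i p) * f p)"
    by (subst sum.swap) (simp add: sum_distrib_right)
  finally show ?thesis .
qed

lemma kmed_cost_recovery_bounds:
  fixes P :: "'a::metric_space set" and A :: "'i \<Rightarrow> 'a \<Rightarrow> real"
  assumes "finite P" "\<forall>i\<in>R. \<forall>p\<in>P. A i p = 0 \<or> A i p = 1"
    and "\<forall>p\<in>P. 1 \<le> (\<Sum>i\<in>R. b i * A i p) \<and> (\<Sum>i\<in>R. b i * A i p) \<le> 1 + \<delta>"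
  shows kmed_cost_le_recovery: "kmed_cost P C \<le> (\<Sum>i\<in>R. b i * kmed_cost {p\<in>P. A i p = 1} C)"
    and kmed_cost_recovery_le: "(\<Sum>i\<in>R. b i * kmed_cost {p\<in>P. A i p = 1} C) \<le> (1 + \<delta>) * kmed_cost P C"
proof -
  have eq: "(\<Sum>i\<in>R. b i * kmed_cost {p\<in>P. A i p = 1} C)
      = (\<Sum>p\<in>P. (\<Sum>i\<in>R. b i * A i p) * infdist p C)"
    unfolding kmed_cost_def by (rule sum_rows_eq_sum_coverage[OF assms(1,2)])
  show "kmed_cost P C \<le> (\<Sum>i\<in>R. b i * kmed_cost {p\<in>P. A i p = 1} C)"
    unfolding eq unfolding kmed_cost_def
  proof (rule sum_mono)
    fix p assume "p \<in> P"
    then show "infdist p C \<le> (\<Sum>i\<in>R. b i * A i p) * infdist p C"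
      using assms(3) mult_right_mono[OF _ infdist_nonneg, of 1 "\<Sum>i\<in>R. b i * A i p" p C] by simp
  qed
  show "(\<Sum>i\<in>R. b i * kmed_cost {p\<in>P. A i p = 1} C) \<le> (1 + \<delta>) * kmed_cost P C"
    unfolding eq unfolding kmed_cost_def sum_distrib_left
    using assms(3) infdist_nonneg by (intro sum_mono mult_right_mono) auto
qed

lemma sum_nonneg_weights_mono:
  fixes b :: "'i \<Rightarrow> real"
  assumes "\<forall>i\<in>R. b i \<ge> 0" "\<And>i. i \<in> R \<Longrightarrow> f i \<le> g i"
  shows "(\<Sum>i\<in>R. b i * f i) \<le> (\<Sum>i\<in>R. b i * g i)"
  using assms by (intro sum_mono mult_left_mono) auto

lemma sum_weighted_image_cost_bounds:
  fixes Q Y :: "'i \<Rightarrow> 'a::metric_space set" and b :: "'i \<Rightarrow> real"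
  assumes "\<forall>i\<in>R. b i \<ge> 0" "\<forall>i\<in>R. \<forall>p\<in>Q i. dist p (\<sigma> i p) = infdist p (Y i)"
  shows sum_weighted_cost_sub_le_image:
      "(\<Sum>i\<in>R. b i * kmed_cost (Q i) C) - (\<Sum>i\<in>R. b i * kmed_cost (Q i) (Y i))
         \<le> (\<Sum>i\<in>R. b i * (\<Sum>p\<in>Q i. infdist (\<sigma> i p) C))"
    and sum_weighted_image_le_add:
      "(\<Sum>i\<in>R. b i * (\<Sum>p\<in>Q i. infdist (\<sigma> i p) C))
         \<le> (\<Sum>i\<in>R. b i * kmed_cost (Q i) C) + (\<Sum>i\<in>R. b i * kmed_cost (Q i) (Y i))"
proof -
  have "(\<Sum>i\<in>R. b i * (kmed_cost (Q i) C - kmed_cost (Q i) (Y i)))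
      \<le> (\<Sum>i\<in>R. b i * (\<Sum>p\<in>Q i. infdist (\<sigma> i p) C))"
    using assms by (intro sum_nonneg_weights_mono kmed_cost_sub_le_image) auto
  then show "(\<Sum>i\<in>R. b i * kmed_cost (Q i) C) - (\<Sum>i\<in>R. b i * kmed_cost (Q i) (Y i))
      \<le> (\<Sum>i\<in>R. b i * (\<Sum>p\<in>Q i. infdist (\<sigma> i p) C))"
    by (simp add: right_diff_distrib sum_subtractf)
  have "(\<Sum>i\<in>R. b i * (\<Sum>p\<in>Q i. infdist (\<sigma> i p) C))
      \<le> (\<Sum>i\<in>R. b i * (kmed_cost (Q i) C + kmed_cost (Q i) (Y i)))"
    using assms by (intro sum_nonneg_weights_mono kmed_cost_image_le_add) auto
  then show "(\<Sum>i\<in>R. b i * (\<Sum>p\<in>Q i. infdist (\<sigma> i p) C))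
      \<le> (\<Sum>i\<in>R. b i * kmed_cost (Q i) C) + (\<Sum>i\<in>R. b i * kmed_cost (Q i) (Y i))"
    by (simp add: distrib_left sum.distrib)
qed

theorem lemma2:
  fixes P :: "(real ^ 'd) set"
    and s t k :: nat
    and \<delta> :: real
    and A :: "nat \<Rightarrow> real ^ 'd \<Rightarrow> real"
    and R :: "nat set"
    and b :: "nat \<Rightarrow> real"
    and Y :: "nat \<Rightarrow> (real ^ 'd) set"
    and \<sigma> :: "nat \<Rightarrow> real ^ 'd \<Rightarrow> real ^ 'd"
    and C :: "(real ^ 'd) set"
  assumes finP: "finite P"
    and ts: "t < s"
    and dpos: "\<delta> > 0"
    and k1: "k \<ge> 1"
    and A01: "\<forall>i<s. \<forall>p\<in>P. A i p = 0 \<or> A i p = 1"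
    and SR: "straggler_resilient s t \<delta> P A"
    and Rsub: "R \<subseteq> {..<s}"
    and Rcard: "card R \<ge> s - t"
    and bnn: "\<forall>i\<in>R. b i \<ge> 0"
    and brec: "\<forall>p\<in>P. 1 \<le> (\<Sum>i\<in>R. b i * A i p) \<and> (\<Sum>i\<in>R. b i * A i p) \<le> 1 + \<delta>"
    and Ycard: "\<forall>i\<in>R. card (Y i) = k"
    and Yopt: "\<forall>i\<in>R. \<forall>C'. card C' = k \<longrightarrow>
                 kmed_cost {p\<in>P. A i p = 1} (Y i) \<le> kmed_cost {p\<in>P. A i p = 1} C'"
    and \<sigma>: "\<forall>i\<in>R. \<forall>p\<in>{p\<in>P. A i p = 1}.
                 \<sigma> i p \<in> Y i \<and> dist p (\<sigma> i p) = infdist p (Y i)"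
    and Ccard: "card C = k"
  shows "kmed_cost P C - (\<Sum>i\<in>R. b i * kmed_cost {p\<in>P. A i p = 1} (Y i))
           \<le> kmed_wcost (\<Union>i\<in>R. Y i) C
                (\<lambda>c. \<Sum>i\<in>{i\<in>R. c \<in> Y i}. b i * real (card {p\<in>P. A i p = 1 \<and> \<sigma> i p = c}))
       \<and> kmed_wcost (\<Union>i\<in>R. Y i) C
                (\<lambda>c. \<Sum>i\<in>{i\<in>R. c \<in> Y i}. b i * real (card {p\<in>P. A i p = 1 \<and> \<sigma> i p = c}))
           \<le> 2 * (1 + \<delta>) * kmed_cost P C"
proof -
  define Q where "Q i = {p\<in>P. A i p = 1}" for i
  define M where "M = (\<Sum>i\<in>R. b i * (\<Sum>p\<in>Q i. infdist (\<sigma> i p) C))"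
  have A01R: "\<forall>i\<in>R. \<forall>p\<in>P. A i p = 0 \<or> A i p = 1" using A01 Rsub by blast
  have nearest: "\<forall>i\<in>R. \<forall>p\<in>Q i. dist p (\<sigma> i p) = infdist p (Y i)"
    using \<sigma> unfolding Q_def by blast
  have optimal: "(\<Sum>i\<in>R. b i * kmed_cost (Q i) (Y i)) \<le> (\<Sum>i\<in>R. b i * kmed_cost (Q i) C)"
    using Yopt Ccard bnn unfolding Q_def by (intro sum_nonneg_weights_mono) auto
  have "kmed_wcost (\<Union>i\<in>R. Y i) C
          (\<lambda>c. \<Sum>i\<in>{i\<in>R. c \<in> Y i}. b i * real (card {p\<in>Q i. \<sigma> i p = c})) = M"
    unfolding M_def using Rsub finite_subset finP Ycard k1 \<sigma>
    by (intro kmed_wcost_Union_assigned) (auto simp: Q_def intro: card_ge_0_finite)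
  moreover have "kmed_cost P C - (\<Sum>i\<in>R. b i * kmed_cost (Q i) (Y i)) \<le> M"
    using sum_weighted_cost_sub_le_image[OF bnn nearest, of C]
      kmed_cost_le_recovery[OF finP A01R brec, of C]
    unfolding M_def Q_def by linarith
  moreover have "M \<le> 2 * (1 + \<delta>) * kmed_cost P C"
    using optimal sum_weighted_image_le_add[OF bnn nearest, of C]
      kmed_cost_recovery_le[OF finP A01R brec, of C]
    unfolding M_def Q_def mult.assoc by linarith
  ultimately show ?thesis
    unfolding Q_def M_def by (simp add: conj_assoc)
qed

end
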